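(* Let $\alpha\in\mathbb{R}$ and $\beta\in\mathbb{R}\setminus\mathbb{Z}$, and define, with $\sigma_{\alpha,\beta}(z)=[(1+\alpha+\beta)^2+4z]^{1/2}$, $$\widehat m_{\alpha,\beta}(z)=\frac{-\Gamma(1-\beta)}{2^{1+\alpha+\beta}\beta\Gamma(1+\beta)}\,\frac{\Gamma([1+\alpha+\beta+\sigma_{\alpha,\beta}(z)]/2)\,\Gamma([1+\alpha+\beta-\sigma_{\alpha,\beta}(z)]/2)}{\Gamma([1+\alpha-\beta+\sigma_{\alpha,\beta}(z)]/2)\,\Gamma([1+\alpha-\beta-\sigma_{\alpha,\beta}(z)]/2)},$$ for $z\in\mathbb{C}\setminus\{n(n+1+\alpha+\beta)\}_{n\in\mathbb{N}_0}$. Then $\widehat m_{\alpha,\beta}$ has the Nevanlinna--Herglotz property if and only if $\alpha\in(-\mathbb{N})\cup(-1,\infty)$ and $\beta\in(-1,0)\cup(0,1)$.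
   Context: A function $m$ has the Nevanlinna--Herglotz property if it is analytic in the open upper half-plane $\mathbb{C}_+$ and satisfies $\operatorname{Im}(m(z))>0$ for all $z\in\mathbb{C}_+$. The expression defining $\widehat m_{\alpha,\beta}$ is even in $\sigma_{\alpha,\beta}(z)$, so the branch of the square root is irrelevant. $\mathbb{N}_0=\mathbb{N}\cup\{0\}$. *)

theory Defs
  imports "HOL-Analysis.Analysis"
begin

definition sigma_ab :: "real \<Rightarrow> real \<Rightarrow> complex \<Rightarrow> complex" where
  "sigma_ab \<alpha> \<beta> z = csqrt ((complex_of_real (1 + \<alpha> + \<beta>))\<^sup>2 + 4 * z)"

definition m_hat :: "real \<Rightarrow> real \<Rightarrow> complex \<Rightarrow> complex" where
  "m_hat \<alpha> \<beta> z =
     (- Gamma (complex_of_real (1 - \<beta>)) /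
       (complex_of_real (2 powr (1 + \<alpha> + \<beta>) * \<beta>) * Gamma (complex_of_real (1 + \<beta>))))
     * (Gamma ((complex_of_real (1 + \<alpha> + \<beta>) + sigma_ab \<alpha> \<beta> z) / 2)
        * Gamma ((complex_of_real (1 + \<alpha> + \<beta>) - sigma_ab \<alpha> \<beta> z) / 2))
     / (Gamma ((complex_of_real (1 + \<alpha> - \<beta>) + sigma_ab \<alpha> \<beta> z) / 2)
        * Gamma ((complex_of_real (1 + \<alpha> - \<beta>) - sigma_ab \<alpha> \<beta> z) / 2))"

definition nevanlinna_herglotz :: "(complex \<Rightarrow> complex) \<Rightarrow> bool" where
  "nevanlinna_herglotz m \<longleftrightarrow>
     m analytic_on {z. Im z > 0} \<and> (\<forall>z. Im z > 0 \<longrightarrow> Im (m z) > 0)"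

end

(*
  With h = (1 + alpha + beta) / 2 and u, v the roots of w^2 - 2 h w - z, m_hat is a real constant K
  times Gamma(u) Gamma(v) / (Gamma(u - beta) Gamma(v - beta)). Euler's product for Gamma turns this
  quotient into the convergent product of (mu_n - z) / (lambda_n - z), where lambda_n = n (n + 2 h)
  are the poles and mu_n = (n - beta) (n - beta + 2 h) the zeros. On the upper half-plane its argument
  is therefore Theta(z) = sum_n [arg (mu_n - z) - arg (lambda_n - z)], and m_hat is Herglotz iff
  K sin Theta > 0 there.

  Under the stated conditions the zeros and poles interlace from some index on (for alpha = -n the
  first n zeros are the first n poles in reverse order and cancel), so Theta is an alternating sum of
  increasing angles and lies in (0, pi) or (-pi, 0) according to the sign of beta, which is opposite
  to the sign of K.

  Conversely, as z tends to a real point p along a ray, Theta tends to -pi times the number of zeros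
  minus poles below p, plus a direction-dependent multiple of the same count at p. Positivity of
  K sin Theta confines the count below p to {0, 1} if K < 0 and to {-1, 0} if K > 0. Far out along
  the spectrum it takes both values floor beta and floor beta + 1, which forces |beta| < 1 with the
  sign of beta opposite to K; near the bottom of the spectrum a non-integer alpha < -1 makes it leave
  the allowed range.
*)
theory Submission
  imports Defs "HOL-Real_Asymp.Real_Asymp"
begin

text \<open>With \<open>h = (1 + \<alpha> + \<beta>) / 2\<close>, the poles of \<open>m_hat \<alpha> \<beta>\<close> are the points
  \<open>eig h n = n (n + 1 + \<alpha> + \<beta>)\<close> and its zeros are the points \<open>eig h (n - \<beta>)\<close>.\<close>

definition eig :: "real \<Rightarrow> real \<Rightarrow> real" where
  "eig h x = x * (x + 2 * h)"

lemma eig_diff: "eig h x - eig h y = (x - y) * (x + y + 2 * h)"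
  by (simp add: eig_def algebra_simps)

lemma eig_reflect: "eig h (- (2 * h) - x) = eig h x"
  by (simp add: eig_def algebra_simps)

lemma eig_less_iff:
  assumes "r > 0"
  shows "eig h x < r\<^sup>2 - h\<^sup>2 \<longleftrightarrow> \<bar>x + h\<bar> < r"
proof -
  have "eig h x < r\<^sup>2 - h\<^sup>2 \<longleftrightarrow> (x + h)\<^sup>2 < r\<^sup>2"
    by (simp add: eig_def power2_eq_square algebra_simps)
  also have "\<dots> \<longleftrightarrow> \<bar>x + h\<bar> < \<bar>r\<bar>"
    by (simp add: abs_le_square_iff linorder_not_le[symmetric])
  finally show ?thesis
    using assms by simp
qed

lemma eventually_eig_ge: "\<forall>\<^sub>F n in sequentially. real n ^ 2 / 2 + d \<le> eig h (real n + c)"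
  unfolding eig_def by real_asymp

lemma eventually_eig_gt: "\<forall>\<^sub>F n in sequentially. p < eig h (real n + c)"
  unfolding eig_def by real_asymp

lemma finite_eig_le: "finite {n. eig h (real n + c) \<le> p}"
proof -
  obtain N where N: "\<And>n. n \<ge> N \<Longrightarrow> p < eig h (real n + c)"
    using eventually_eig_gt[of p h c] by (auto simp: eventually_sequentially)
  have "n < N" if "eig h (real n + c) \<le> p" for n
    using N[of n] that by (cases "N \<le> n") auto
  then have "{n. eig h (real n + c) \<le> p} \<subseteq> {..<N}"
    by blast
  then show ?thesis
    using finite_subset by blast
qed

definition phase :: "complex \<Rightarrow> real \<Rightarrow> real" where
  "phase z q = arctan ((q - Re z) / Im z)"

text \<open>For \<open>Im z > 0\<close>, \<open>phase z q\<close> is \<open>arg (q - z) + pi/2\<close>; unlike \<open>arg\<close>, it is continuous in \<open>q\<close> and \<open>z\<close>.\<close>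

lemma phase_polar:
  assumes "Im z > 0"
  shows "of_real q - z = of_real (cmod (of_real q - z)) * (- \<i>) * cis (phase z q)"
proof -
  define a where "a = (q - Re z) / Im z"
  define S where "S = sqrt (1 + a\<^sup>2)"
  have "S > 0"
    unfolding S_def by (simp add: add_pos_nonneg)
  have qa: "q - Re z = a * Im z"
    using assms unfolding a_def by simp
  have "cmod (of_real q - z) = sqrt ((q - Re z)\<^sup>2 + (Im z)\<^sup>2)"
    by (simp add: cmod_def)
  also have "(q - Re z)\<^sup>2 + (Im z)\<^sup>2 = (Im z)\<^sup>2 * (1 + a\<^sup>2)"
    unfolding qa by (simp add: algebra_simps)
  also have "sqrt \<dots> = Im z * S"
    using assms unfolding S_def by (simp add: real_sqrt_mult)
  finally have "cmod (of_real q - z) = Im z * S" .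
  moreover have "cos (arctan a) = 1 / S" "sin (arctan a) = a / S"
    unfolding S_def by (simp_all add: cos_arctan sin_arctan)
  ultimately show ?thesis
    unfolding phase_def a_def[symmetric] using \<open>S > 0\<close> qa
    by (simp add: complex_eq_iff field_simps)
qed

lemma quotient_polar:
  assumes "Im z > 0"
  shows "(of_real q - z) / (of_real q' - z) =
    of_real (cmod (of_real q - z) / cmod (of_real q' - z)) * cis (phase z q - phase z q')"
proof -
  have "cmod (of_real q' - z) \<noteq> 0"
    using assms by (auto simp: complex_eq_iff)
  then show ?thesis
    by (subst (1 2) phase_polar[OF assms]) (simp add: field_simps cis_divide[symmetric])
qed

lemma phase_strict_mono: "Im z > 0 \<Longrightarrow> strict_mono (phase z)"
  unfolding phase_def strict_mono_def by (intro allI impI arctan_monotone divide_strict_right_mono) auto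

lemma abs_phase_less: "\<bar>phase z q\<bar> < pi / 2"
  unfolding phase_def abs_less_iff using arctan_lbound arctan_ubound by (meson minus_less_iff)

lemma abs_phase_diff_le:
  assumes "Im z > 0" "Re z < q" "Re z < q'"
  shows "\<bar>phase z q - phase z q'\<bar> \<le> \<bar>q - q'\<bar> * Im z / ((q - Re z) * (q' - Re z))"
proof -
  define a where "a = (q - Re z) / Im z"
  define a' where "a' = (q' - Re z) / Im z"
  have "a > 0" "a' > 0"
    using assms by (simp_all add: a_def a'_def)
  moreover have "0 < arctan a" "0 < arctan a'" "arctan a < pi / 2" "arctan a' < pi / 2"
    using \<open>a > 0\<close> \<open>a' > 0\<close> arctan_ubound by auto
  ultimately have "\<bar>arctan a + arctan (- a')\<bar> < pi / 2"
    unfolding arctan_minus abs_less_iff by linarith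
  then have "phase z q - phase z q' = arctan ((a - a') / (1 + a * a'))"
    unfolding phase_def a_def[symmetric] a'_def[symmetric] using arctan_add_raw
    by (fastforce simp: arctan_minus)
  also have "\<bar>\<dots>\<bar> \<le> \<bar>a - a'\<bar> / (1 + a * a')"
    using abs_arctan_le[of "(a - a') / (1 + a * a')"] \<open>a > 0\<close> \<open>a' > 0\<close>
    by (simp add: abs_div add_pos_pos)
  also have "\<dots> \<le> \<bar>a - a'\<bar> / (a * a')"
    using \<open>a > 0\<close> \<open>a' > 0\<close> by (intro divide_left_mono) (auto intro!: mult_pos_pos add_pos_pos)
  also have "\<dots> = \<bar>q - q'\<bar> * Im z / ((q - Re z) * (q' - Re z))"
    using assms by (simp add: a_def a'_def field_simps abs_div)
  finally show ?thesis .
qed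

lemma abs_eig_shift_diff_le:
  assumes "n \<ge> 1"
  shows "\<bar>eig h (real n - b) - eig h (real n)\<bar> \<le> \<bar>b\<bar> * (2 + \<bar>2 * h - b\<bar>) * real n"
proof -
  have "eig h (real n - b) - eig h (real n) = - b * (2 * real n + (2 * h - b))"
    by (simp add: eig_diff algebra_simps)
  then have "\<bar>eig h (real n - b) - eig h (real n)\<bar> = \<bar>b\<bar> * \<bar>2 * real n + (2 * h - b)\<bar>"
    by (simp add: abs_mult)
  also have "\<bar>2 * real n + (2 * h - b)\<bar> \<le> 2 * real n + \<bar>2 * h - b\<bar>"
    using abs_triangle_ineq[of "2 * real n" "2 * h - b"] by simp
  also have "\<dots> \<le> (2 + \<bar>2 * h - b\<bar>) * real n"
    using assms mult_right_mono[of 1 "real n" "\<bar>2 * h - b\<bar>"] by (simp add: algebra_simps)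
  finally show ?thesis
    by (simp add: mult_left_mono mult.assoc)
qed

lemma abs_phase_shift_diff_le:
  assumes "n \<ge> 1" "0 < Im z" "Im z \<le> Y"
    and "real n ^ 2 / 2 \<le> eig h (real n - b) - Re z" "real n ^ 2 / 2 \<le> eig h (real n) - Re z"
  shows "\<bar>phase z (eig h (real n - b)) - phase z (eig h (real n))\<bar> \<le>
    4 * Y * (\<bar>b\<bar> * (2 + \<bar>2 * h - b\<bar>)) / real n ^ 3"
proof -
  define B where "B = \<bar>b\<bar> * (2 + \<bar>2 * h - b\<bar>)"
  have "0 < real n ^ 2 / 2"
    using assms(1) by simp
  then have "0 < eig h (real n - b) - Re z" "0 < eig h (real n) - Re z"
    using assms(4,5) by linarith+
  then have "\<bar>phase z (eig h (real n - b)) - phase z (eig h (real n))\<bar>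
      \<le> \<bar>eig h (real n - b) - eig h (real n)\<bar> * Im z / ((real n ^ 2 / 2) * (real n ^ 2 / 2))"
    using assms by (intro order_trans[OF abs_phase_diff_le] divide_left_mono mult_mono) (auto intro!: mult_pos_pos)
  also have "\<dots> \<le> B * real n * Y / ((real n ^ 2 / 2) * (real n ^ 2 / 2))"
    using assms abs_eig_shift_diff_le[OF assms(1), of h b] unfolding B_def
    by (intro divide_right_mono mult_mono) auto
  also have "\<dots> = 4 * Y * B / real n ^ 3"
    using assms(1) by (simp add: field_simps power2_eq_square power3_eq_cube)
  finally show ?thesis
    unfolding B_def .
qed

lemma phase_diff_majorant:
  obtains M where "summable M" and
    "\<And>n z. \<bar>Re z\<bar> \<le> X \<Longrightarrow> 0 < Im z \<Longrightarrow> Im z \<le> Y \<Longrightarrow>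
       \<bar>phase z (eig h (real n - b)) - phase z (eig h (real n))\<bar> \<le> M n"
proof -
  obtain N where N: "\<And>n. n \<ge> N \<Longrightarrow> n \<ge> 1 \<and> real n ^ 2 / 2 + X \<le> eig h (real n + - b)
      \<and> real n ^ 2 / 2 + X \<le> eig h (real n + 0)"
    using eventually_conj[OF eventually_ge_at_top[of 1]
        eventually_conj[OF eventually_eig_ge[of X h "- b"] eventually_eig_ge[of X h 0]]]
    by (auto simp: eventually_sequentially)
  define C where "C = 4 * Y * (\<bar>b\<bar> * (2 + \<bar>2 * h - b\<bar>))"
  define M where "M n = (if n < N then pi else C / real n ^ 3)" for n
  have "summable M"
  proof (rule summable_cong[THEN iffD2])
    show "\<forall>\<^sub>F n in sequentially. M n = C * inverse (real n ^ 3)"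
      unfolding M_def eventually_sequentially by (intro exI[of _ N]) (simp add: divide_inverse)
    show "summable (\<lambda>n. C * inverse (real n ^ 3))"
      by (intro summable_mult inverse_power_summable) simp
  qed
  moreover have "\<bar>phase z (eig h (real n - b)) - phase z (eig h (real n))\<bar> \<le> M n"
    if "\<bar>Re z\<bar> \<le> X" "0 < Im z" "Im z \<le> Y" for n z
  proof (cases "n < N")
    case True
    then show ?thesis
      using abs_phase_less[of z "eig h (real n - b)"] abs_phase_less[of z "eig h (real n)"]
      by (simp add: M_def)
  next
    case False
    then have "n \<ge> 1" "real n ^ 2 / 2 \<le> eig h (real n - b) - Re z" "real n ^ 2 / 2 \<le> eig h (real n) - Re z"
      using N[of n] that(1) by auto
    then show ?thesis
      using abs_phase_shift_diff_le[of n z Y h b] that(2,3) False unfolding M_def C_def by simp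
  qed
  ultimately show ?thesis
    using that by blast
qed

lemma summable_phase_diff:
  assumes "Im z > 0"
  shows "summable (\<lambda>n. phase z (eig h (real n - b)) - phase z (eig h (real n)))"
proof -
  obtain M where "summable M" and M: "\<And>n w. \<bar>Re w\<bar> \<le> \<bar>Re z\<bar> \<Longrightarrow> 0 < Im w \<Longrightarrow> Im w \<le> Im z \<Longrightarrow>
      \<bar>phase w (eig h (real n - b)) - phase w (eig h (real n))\<bar> \<le> M n"
    using phase_diff_majorant[where X = "\<bar>Re z\<bar>" and Y = "Im z" and h = h and b = b] by blast
  show ?thesis
    using M[of z] assms by (intro summable_comparison_test[OF _ \<open>summable M\<close>]) auto
qed

definition phase_sum :: "real \<Rightarrow> real \<Rightarrow> complex \<Rightarrow> real" where
  "phase_sum h b z = (\<Sum>n. phase z (eig h (real n - b)) - phase z (eig h (real n)))"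

section \<open>The Gamma quotient in polar form\<close>

lemma Gamma_series_shift_quotient:
  fixes w :: complex
  shows "Gamma_series w N / Gamma_series (w - of_real b) N =
    of_real (exp (b * ln (real N))) * pochhammer (w - of_real b) (Suc N) / pochhammer w (Suc N)"
proof -
  define L where "L = (of_real (ln (real N)) :: complex)"
  define E where "E = exp ((w - of_real b) * L)"
  define e where "e = (of_real (exp (b * ln (real N))) :: complex)"
  have "exp (w * L) = e * E"
    by (simp add: L_def E_def e_def exp_of_real[symmetric] exp_add[symmetric] algebra_simps)
  moreover have "(fact N :: complex) \<noteq> 0" "E \<noteq> 0"
    by (simp_all add: E_def)
  ultimately show ?thesis
    unfolding Gamma_series_def L_def[symmetric] E_def[symmetric] e_def[symmetric] Suc_eq_plus1
    by (cases "pochhammer w (N + 1) = 0"; cases "pochhammer (w - of_real b) (N + 1) = 0") simp_all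
qed

lemma eig_factor:
  fixes u v z :: complex
  assumes "u + v = of_real (2 * h)" "u * v = - z"
  shows "(u + of_real x) * (v + of_real x) = of_real (eig h x) - z"
proof -
  have "(u + of_real x) * (v + of_real x) = of_real x * of_real x + (u + v) * of_real x + u * v"
    by (simp add: algebra_simps)
  then show ?thesis
    using assms by (simp add: eig_def algebra_simps)
qed

lemma Gamma_series_quotient_eq_prod:
  fixes u v z :: complex
  assumes "u + v = of_real (2 * h)" "u * v = - z"
  shows "Gamma_series u N * Gamma_series v N / (Gamma_series (u - of_real b) N * Gamma_series (v - of_real b) N) =
    of_real (exp (2 * b * ln (real N))) *
    (\<Prod>n\<le>N. (of_real (eig h (real n - b)) - z) / (of_real (eig h (real n)) - z))"
proof -
  have poch: "pochhammer w (Suc N) = (\<Prod>n\<le>N. w + of_nat n)" for w :: complex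
    by (simp add: pochhammer_prod atLeast0LessThan lessThan_Suc_atMost)
  have "(\<Prod>n\<le>N. (of_real (eig h (real n - b)) - z) / (of_real (eig h (real n)) - z)) =
      (\<Prod>n\<le>N. ((u - of_real b + of_nat n) * (v - of_real b + of_nat n)) /
        ((u + of_nat n) * (v + of_nat n)))"
    by (intro prod.cong refl) (simp add: eig_factor[OF assms, symmetric] algebra_simps)
  also have "\<dots> = pochhammer (u - of_real b) (Suc N) * pochhammer (v - of_real b) (Suc N) /
      (pochhammer u (Suc N) * pochhammer v (Suc N))"
    by (simp add: poch prod_dividef prod.distrib)
  finally show ?thesis
    unfolding times_divide_times_eq[symmetric] Gamma_series_shift_quotient
    by (simp add: exp_add[symmetric] of_real_mult[symmetric] del: of_real_mult)
qed

lemma polar_form_of_limit: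
  fixes G :: complex
  assumes "\<And>N. R N \<ge> 0" "T \<longlonglongrightarrow> \<theta>" "(\<lambda>N. of_real (R N) * cis (T N)) \<longlonglongrightarrow> G" "G \<noteq> 0"
  shows "\<exists>\<rho>>0. G = of_real \<rho> * cis \<theta>"
proof -
  define L where "L = G * cis (- \<theta>)"
  have "(\<lambda>N. of_real (R N) * cis (T N) * cis (- T N)) \<longlonglongrightarrow> L"
    unfolding L_def by (intro tendsto_intros assms)
  then have lim: "(\<lambda>N. of_real (R N)) \<longlonglongrightarrow> L"
    by (simp add: cis_mult mult.assoc)
  have "L = of_real (Re L)"
    using tendsto_Im[OF lim] by (simp add: LIMSEQ_const_iff complex_eq_iff)
  moreover have "Re L \<ge> 0"
    using tendsto_Re[OF lim] assms(1) by (intro LIMSEQ_le_const) auto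
  moreover have "G = L * cis \<theta>"
    by (simp add: L_def cis_mult)
  ultimately show ?thesis
    using assms(4) by (intro exI[of _ "Re L"]) (metis less_eq_real_def mult_eq_0_iff of_real_0)
qed

lemma prod_cis: "(\<Prod>n\<in>A. cis (t n)) = cis (sum t A)"
  by (induction A rule: infinite_finite_induct) (auto simp: cis_mult)

lemma Gamma_quotient_polar:
  assumes z: "Im z > 0" and uv: "u + v = of_real (2 * h)" "u * v = - z"
  shows "\<exists>\<rho>>0. Gamma u * Gamma v / (Gamma (u - of_real b) * Gamma (v - of_real b)) =
    of_real \<rho> * cis (phase_sum h b z)"
proof -
  have "Im v = - Im u"
    using arg_cong[OF uv(1), of Im] by simp
  moreover have "Im u \<noteq> 0"
    using arg_cong[OF uv(2), of Im] z \<open>Im v = - Im u\<close> by auto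
  ultimately have nonpos: "w \<notin> \<int>\<^sub>\<le>\<^sub>0" if "w \<in> {u, v, u - of_real b, v - of_real b}" for w
    using that by (auto elim!: nonpos_Ints_cases simp: complex_eq_iff)
  have G: "(\<lambda>N. Gamma_series u N * Gamma_series v N / (Gamma_series (u - of_real b) N * Gamma_series (v - of_real b) N))
      \<longlonglongrightarrow> Gamma u * Gamma v / (Gamma (u - of_real b) * Gamma (v - of_real b))"
    using nonpos by (intro tendsto_intros) (auto simp: Gamma_nonzero)
  have "Gamma u * Gamma v / (Gamma (u - of_real b) * Gamma (v - of_real b)) \<noteq> 0"
    using nonpos by (auto simp: Gamma_nonzero)
  define f where "f n = phase z (eig h (real n - b)) - phase z (eig h (real n))" for n
  define r where "r n = cmod (of_real (eig h (real n - b)) - z) / cmod (of_real (eig h (real n)) - z)" for n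
  define R where "R N = exp (2 * b * ln (real N)) * (\<Prod>n\<le>N. r n)" for N
  have "(\<Prod>n\<le>N. (of_real (eig h (real n - b)) - z) / (of_real (eig h (real n)) - z)) =
      (\<Prod>n\<le>N. of_real (r n) * cis (f n))" for N
    unfolding r_def f_def by (intro prod.cong refl quotient_polar z)
  then have "Gamma_series u N * Gamma_series v N / (Gamma_series (u - of_real b) N * Gamma_series (v - of_real b) N) =
      of_real (R N) * cis (\<Sum>n\<le>N. f n)" for N
    by (simp add: Gamma_series_quotient_eq_prod[OF uv] prod.distrib prod_cis R_def)
  moreover have "(\<lambda>N. \<Sum>n\<le>N. f n) \<longlonglongrightarrow> phase_sum h b z"
    unfolding phase_sum_def f_def by (intro summable_LIMSEQ' summable_phase_diff z)
  moreover have "R N \<ge> 0" for N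
    unfolding R_def r_def by (intro mult_nonneg_nonneg prod_nonneg) auto
  ultimately show ?thesis
    using G \<open>Gamma u * Gamma v / (Gamma (u - of_real b) * Gamma (v - of_real b)) \<noteq> 0\<close>
    by (intro polar_form_of_limit[where R = R]) auto
qed

lemma Im_sigma_ab_nonzero:
  assumes "Im z \<noteq> 0"
  shows "Im (sigma_ab \<alpha> \<beta> z) \<noteq> 0"
proof
  assume "Im (sigma_ab \<alpha> \<beta> z) = 0"
  then have "Im ((sigma_ab \<alpha> \<beta> z)\<^sup>2) = 0"
    by (simp add: power2_eq_square)
  then show False
    using assms by (simp add: sigma_ab_def)
qed

definition m_hat_const :: "real \<Rightarrow> real \<Rightarrow> real" where
  "m_hat_const \<alpha> \<beta> = - Gamma (1 - \<beta>) / (2 powr (1 + \<alpha> + \<beta>) * \<beta> * Gamma (1 + \<beta>))"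

lemma m_hat_const_nonzero:
  assumes "\<beta> \<notin> \<int>"
  shows "m_hat_const \<alpha> \<beta> \<noteq> 0"
proof -
  have "1 - \<beta> \<notin> \<int>" "1 + \<beta> \<notin> \<int>"
    using assms Ints_diff[OF Ints_1, of "1 - \<beta>"] Ints_diff[OF _ Ints_1, of "1 + \<beta>"] by auto
  then have "Gamma (1 - \<beta>) \<noteq> 0" "Gamma (1 + \<beta>) \<noteq> 0"
    by (auto simp: Gamma_eq_zero_iff)
  moreover have "\<beta> \<noteq> 0"
    using assms by auto
  ultimately show ?thesis
    by (simp add: m_hat_const_def)
qed

lemma m_hat_const_mult_neg:
  assumes "\<beta> \<noteq> 0" "\<bar>\<beta>\<bar> < 1"
  shows "m_hat_const \<alpha> \<beta> * \<beta> < 0"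
proof -
  have "m_hat_const \<alpha> \<beta> * \<beta> = - (Gamma (1 - \<beta>) / (2 powr (1 + \<alpha> + \<beta>) * Gamma (1 + \<beta>)))"
    using assms(1) by (simp add: m_hat_const_def)
  moreover have "Gamma (1 - \<beta>) > 0" "Gamma (1 + \<beta>) > 0"
    using assms(2) by (simp_all add: abs_less_iff)
  ultimately show ?thesis
    by simp
qed

lemma m_hat_polar:
  assumes "Im z > 0"
  shows "\<exists>\<rho>>0. m_hat \<alpha> \<beta> z =
    of_real (\<rho> * m_hat_const \<alpha> \<beta>) * cis (phase_sum ((1 + \<alpha> + \<beta>) / 2) \<beta> z)"
proof -
  define c where "c = (of_real (1 + \<alpha> + \<beta>) :: complex)"
  define u where "u = (c + sigma_ab \<alpha> \<beta> z) / 2"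
  define v where "v = (c - sigma_ab \<alpha> \<beta> z) / 2"
  have sum: "u + v = of_real (2 * ((1 + \<alpha> + \<beta>) / 2))"
    by (simp add: u_def v_def c_def field_simps)
  have "u * v = (c\<^sup>2 - (sigma_ab \<alpha> \<beta> z)\<^sup>2) / 4"
    by (simp add: u_def v_def field_simps power2_eq_square)
  then have prod: "u * v = - z"
    by (simp add: sigma_ab_def c_def)
  obtain \<rho> where "\<rho> > 0" and \<rho>: "Gamma u * Gamma v / (Gamma (u - of_real \<beta>) * Gamma (v - of_real \<beta>)) =
      of_real \<rho> * cis (phase_sum ((1 + \<alpha> + \<beta>) / 2) \<beta> z)"
    using Gamma_quotient_polar[OF assms sum prod] by blast
  have shifted: "(of_real (1 + \<alpha> - \<beta>) + sigma_ab \<alpha> \<beta> z) / 2 = u - of_real \<beta>"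
    "(of_real (1 + \<alpha> - \<beta>) - sigma_ab \<alpha> \<beta> z) / 2 = v - of_real \<beta>"
    by (simp_all add: u_def v_def c_def field_simps)
  have "m_hat \<alpha> \<beta> z = of_real (m_hat_const \<alpha> \<beta>) *
      (Gamma u * Gamma v / (Gamma (u - of_real \<beta>) * Gamma (v - of_real \<beta>)))"
    unfolding m_hat_def m_hat_const_def c_def[symmetric] u_def[symmetric] v_def[symmetric] shifted
      Gamma_complex_of_real
    by simp
  then show ?thesis
    using \<open>\<rho> > 0\<close> by (intro exI[of _ \<rho>]) (simp add: \<rho>)
qed

lemma Im_m_hat_pos_iff:
  assumes "Im z > 0"
  shows "Im (m_hat \<alpha> \<beta> z) > 0 \<longleftrightarrow>
    m_hat_const \<alpha> \<beta> * sin (phase_sum ((1 + \<alpha> + \<beta>) / 2) \<beta> z) > 0"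
proof -
  obtain \<rho> where "\<rho> > 0" and "m_hat \<alpha> \<beta> z =
      of_real (\<rho> * m_hat_const \<alpha> \<beta>) * cis (phase_sum ((1 + \<alpha> + \<beta>) / 2) \<beta> z)"
    using m_hat_polar[OF assms] by blast
  then have "Im (m_hat \<alpha> \<beta> z) = \<rho> * (m_hat_const \<alpha> \<beta> * sin (phase_sum ((1 + \<alpha> + \<beta>) / 2) \<beta> z))"
    by simp
  then show ?thesis
    using \<open>\<rho> > 0\<close> by (metis mult_pos_pos zero_less_mult_pos)
qed

lemma m_hat_analytic: "m_hat \<alpha> \<beta> analytic_on {z. Im z > 0}"
proof -
  have "sigma_ab \<alpha> \<beta> holomorphic_on {z. Im z > 0}"
    unfolding sigma_ab_def[abs_def]
    by (intro holomorphic_intros) (auto simp: complex_nonpos_Reals_iff power2_eq_square)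
  moreover have "w \<notin> \<int>\<^sub>\<le>\<^sub>0" if "Im w \<noteq> 0" for w
    using that by (auto elim!: nonpos_Ints_cases)
  ultimately have "m_hat \<alpha> \<beta> holomorphic_on {z. Im z > 0}"
    unfolding m_hat_def[abs_def]
    by (intro holomorphic_intros) (auto simp: Gamma_eq_zero_iff Im_sigma_ab_nonzero)
  then show ?thesis
    by (simp add: analytic_on_open open_halfspace_Im_gt)
qed

lemma nevanlinna_herglotz_m_hat_iff:
  "nevanlinna_herglotz (m_hat \<alpha> \<beta>) \<longleftrightarrow>
    (\<forall>z. Im z > 0 \<longrightarrow> m_hat_const \<alpha> \<beta> * sin (phase_sum ((1 + \<alpha> + \<beta>) / 2) \<beta> z) > 0)"
  unfolding nevanlinna_herglotz_def using m_hat_analytic Im_m_hat_pos_iff by blast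

section \<open>Interlacing poles and zeros\<close>

definition neg_nat_or_gt_minus_one :: "real \<Rightarrow> bool" where
  "neg_nat_or_gt_minus_one a \<longleftrightarrow> (\<exists>n::nat. n \<ge> 1 \<and> a = - real n) \<or> a > -1"

lemma interlacing_sum_bounds:
  fixes f :: "real \<Rightarrow> real"
  assumes f: "strict_mono f" "\<And>x. lo < f x" "\<And>x. f x < hi"
    and ab: "\<And>j. a j < b j" "\<And>j. b j < a (Suc j)"
    and sm: "summable (\<lambda>j. f (b j) - f (a j))"
  shows "0 < (\<Sum>j. f (b j) - f (a j))" "(\<Sum>j. f (b j) - f (a j)) < hi - lo"
proof -
  show "0 < (\<Sum>j. f (b j) - f (a j))"
    using f(1) ab(1) by (intro suminf_pos sm) (simp add: strict_mono_less)
  have partial: "(\<Sum>j<J. f (b j) - f (a j)) \<le> f (a J) - f (a 0)" for J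
  proof (induction J)
    case (Suc J)
    have "f (b J) < f (a (Suc J))"
      using f(1) ab(2) by (simp add: strict_mono_less)
    with Suc.IH show ?case
      by simp
  qed simp
  have "(\<Sum>j<J. f (b j) - f (a j)) \<le> hi - f (a 0)" for J
    using partial[of J] f(3)[of "a J"] by linarith
  then have "(\<Sum>j. f (b j) - f (a j)) \<le> hi - f (a 0)"
    by (intro suminf_le_const[OF sm])
  then show "(\<Sum>j. f (b j) - f (a j)) < hi - lo"
    using f(2)[of "a 0"] by linarith
qed

lemma sin_phase_interlacing_pos:
  assumes "Im z > 0" "\<And>j. a j < b j" "\<And>j. b j < a (Suc j)"
    and "summable (\<lambda>j. phase z (b j) - phase z (a j))"
  shows "sin (\<Sum>j. phase z (b j) - phase z (a j)) > 0"
proof -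
  have "- (pi / 2) < phase z x" "phase z x < pi / 2" for x
    using abs_phase_less[of z x] by (simp_all add: abs_less_iff)
  then have "0 < (\<Sum>j. phase z (b j) - phase z (a j))" "(\<Sum>j. phase z (b j) - phase z (a j)) < pi"
    using interlacing_sum_bounds[OF phase_strict_mono[OF assms(1)], of "- (pi / 2)" "pi / 2" a b] assms(2-4)
    by auto
  then show ?thesis
    by (rule sin_gt_zero)
qed

lemma phase_sum_tail:
  assumes "Im z > 0" and "neg_nat_or_gt_minus_one (2 * h - b - 1)"
  obtains n0 where "\<And>m. m \<ge> n0 \<Longrightarrow> 2 * real m + 2 * h - b > 0"
    and "phase_sum h b z = (\<Sum>j. phase z (eig h (real (j + n0) - b)) - phase z (eig h (real (j + n0))))"
proof -
  define f where "f n = phase z (eig h (real n - b)) - phase z (eig h (real n))" for n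
  have tail: "phase_sum h b z = (\<Sum>j. f (j + n0))" if "(\<Sum>i<n0. f i) = 0" for n0
    using suminf_split_initial_segment[OF summable_phase_diff[OF assms(1)], of h b n0] that
    unfolding phase_sum_def f_def by simp
  from assms(2) show ?thesis
    unfolding neg_nat_or_gt_minus_one_def
  proof
    assume "\<exists>n::nat. n \<ge> 1 \<and> 2 * h - b - 1 = - real n"
    then obtain n :: nat where "2 * h - b - 1 = - real n"
      by blast
    then have n: "2 * h - b = 1 - real n"
      by simp
    \<comment> \<open>For \<open>\<alpha> = -n\<close> the first \<open>n\<close> zeros are the first \<open>n\<close> poles in reverse order.\<close>
    have "eig h (real i - b) = eig h (real (n - Suc i))" if "i < n" for i
    proof -
      have "real (n - Suc i) = - (2 * h) - (real i - b)"
        using that n by simp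
      then show ?thesis
        by (simp add: eig_reflect)
    qed
    then have "(\<Sum>i<n. phase z (eig h (real i - b))) = (\<Sum>i<n. phase z (eig h (real (n - Suc i))))"
      by (intro sum.cong) simp_all
    also have "\<dots> = (\<Sum>i<n. phase z (eig h (real i)))"
      by (rule sum.nat_diff_reindex)
    finally have "(\<Sum>i<n. f i) = 0"
      by (simp add: f_def sum_subtractf)
    moreover have "2 * real m + 2 * h - b > 0" if "m \<ge> n" for m
      using that n by simp
    ultimately show ?thesis
      using that tail unfolding f_def by blast
  next
    assume "2 * h - b - 1 > -1"
    then show ?thesis
      using that[of 0] tail[of 0] unfolding f_def by simp
  qed
qed

lemma beta_sin_phase_sum_neg:
  assumes z: "Im z > 0" and b: "b \<noteq> 0" "\<bar>b\<bar> < 1"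
    and alpha: "neg_nat_or_gt_minus_one (2 * h - b - 1)"
  shows "b * sin (phase_sum h b z) < 0"
proof -
  obtain n0 where pos: "\<And>m. m \<ge> n0 \<Longrightarrow> 2 * real m + 2 * h - b > 0"
    and tail: "phase_sum h b z = (\<Sum>j. phase z (eig h (real (j + n0) - b)) - phase z (eig h (real (j + n0))))"
    using phase_sum_tail[OF z alpha] by blast
  define pole where "pole j = eig h (real (j + n0))" for j
  define zero where "zero j = eig h (real (j + n0) - b)" for j
  have "pole j - zero j = b * (2 * real (j + n0) + 2 * h - b)"
    "zero (Suc j) - pole j = (1 - b) * (2 * real (j + n0) + 1 + 2 * h - b)"
    "pole (Suc j) - zero j = (1 + b) * (2 * real (j + n0) + 1 + 2 * h - b)" for j
    unfolding pole_def zero_def eig_diff by (simp_all add: algebra_simps)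
  moreover have "2 * real (j + n0) + 2 * h - b > 0" "2 * real (j + n0) + 1 + 2 * h - b > 0" for j
    using pos[of "j + n0"] by simp_all
  ultimately have gaps: "b > 0 \<Longrightarrow> zero j < pole j \<and> pole j < zero (Suc j)"
    "b < 0 \<Longrightarrow> pole j < zero j \<and> zero j < pole (Suc j)" for j
    using b by (smt (verit) mult_pos_pos mult_neg_pos)+
  have sm: "summable (\<lambda>j. phase z (zero j) - phase z (pole j))"
    using summable_ignore_initial_segment[OF summable_phase_diff[OF z, of h b], of n0]
    unfolding pole_def zero_def .
  have \<Theta>: "phase_sum h b z = (\<Sum>j. phase z (zero j) - phase z (pole j))"
    unfolding tail pole_def zero_def ..
  show ?thesis
  proof (cases "b > 0")
    case True
    have "sin (\<Sum>j. phase z (pole j) - phase z (zero j)) > 0"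
      using gaps(1)[OF True] summable_minus[OF sm] by (intro sin_phase_interlacing_pos z) simp_all
    also have "(\<Sum>j. phase z (pole j) - phase z (zero j)) = - phase_sum h b z"
      unfolding \<Theta> using suminf_minus[OF sm] by simp
    finally show ?thesis
      using True by (simp add: mult_pos_neg)
  next
    case False
    then have "sin (phase_sum h b z) > 0"
      unfolding \<Theta> using gaps(2) b(1) sm by (intro sin_phase_interlacing_pos z) simp_all
    then show ?thesis
      using False b(1) by (simp add: mult_neg_pos)
  qed
qed

section \<open>Boundary values of the phase sum\<close>

definition phase_limit :: "real \<Rightarrow> real \<Rightarrow> real \<Rightarrow> real" where
  "phase_limit p s q = (if q < p then - (pi / 2) else if q = p then arctan (- s) else pi / 2)"

lemma tendsto_phase_along_ray:
  "((\<lambda>t. phase (Complex (p + t * s) t) q) \<longlongrightarrow> phase_limit p s q) (at_right 0)"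
proof -
  consider "q < p" | "q = p" | "q > p"
    by linarith
  then have "((\<lambda>t. arctan ((q - p) / t - s)) \<longlongrightarrow> phase_limit p s q) (at_right 0)"
    by cases (simp_all add: phase_limit_def; real_asymp)+
  moreover have "\<forall>\<^sub>F t in at_right 0. arctan ((q - p) / t - s) = phase (Complex (p + t * s) t) q"
    using eventually_at_right_less[of 0] by eventually_elim (simp add: phase_def diff_divide_distrib add_divide_distrib algebra_simps)
  ultimately show ?thesis
    by (rule Lim_transform_eventually)
qed

definition count_below :: "real \<Rightarrow> real \<Rightarrow> real \<Rightarrow> int" where
  "count_below h b p = int (card {n. eig h (real n - b) < p}) - int (card {n. eig h (real n) < p})"

definition count_at :: "real \<Rightarrow> real \<Rightarrow> real \<Rightarrow> int" where
  "count_at h b p = int (card {n. eig h (real n - b) = p}) - int (card {n. eig h (real n) = p})"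

lemma sum_of_bool_eq_card:
  fixes P :: "nat \<Rightarrow> bool"
  assumes "\<And>n. P n \<Longrightarrow> n < N"
  shows "(\<Sum>n<N. of_bool (P n) :: real) = real (card {n. P n})"
proof -
  have "{..<N} \<inter> {n. P n} = {n. P n}"
    using assms by auto
  moreover have "(\<Sum>n<N. of_bool (P n) :: real) = real (card ({..<N} \<inter> {n. P n}))"
    by (rule sum_of_bool_eq) simp_all
  ultimately show ?thesis
    by simp
qed

lemma sum_phase_limit:
  assumes "\<And>n. n \<ge> N \<Longrightarrow> p < e n"
  shows "(\<Sum>n<N. phase_limit p s (e n)) =
    real N * pi / 2 - pi * card {n. e n < p} + (arctan (- s) - pi / 2) * card {n. e n = p}"
proof -
  have "(\<Sum>n<N. phase_limit p s (e n)) =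
      (\<Sum>n<N. pi / 2 - pi * of_bool (e n < p) + (arctan (- s) - pi / 2) * of_bool (e n = p))"
    by (intro sum.cong) (auto simp: phase_limit_def)
  also have "\<dots> = real N * pi / 2 - pi * (\<Sum>n<N. of_bool (e n < p))
      + (arctan (- s) - pi / 2) * (\<Sum>n<N. of_bool (e n = p))"
    by (simp add: sum.distrib sum_subtractf sum_distrib_left del: sum_of_bool_eq)
  also have "\<dots> = real N * pi / 2 - pi * card {n. e n < p} + (arctan (- s) - pi / 2) * card {n. e n = p}"
    using assms by (subst (1 2) sum_of_bool_eq_card) (force simp: not_le[symmetric])+
  finally show ?thesis .
qed

lemma uniform_limit_phase_sum_along_ray:
  "uniform_limit {0<..1}
    (\<lambda>n t. \<Sum>i<n. phase (Complex (p + t * s) t) (eig h (real i - b)) - phase (Complex (p + t * s) t) (eig h (real i)))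
    (\<lambda>t. phase_sum h b (Complex (p + t * s) t)) sequentially"
proof -
  obtain M where "summable M" and M: "\<And>n z. \<bar>Re z\<bar> \<le> \<bar>p\<bar> + \<bar>s\<bar> \<Longrightarrow> 0 < Im z \<Longrightarrow> Im z \<le> 1 \<Longrightarrow>
      \<bar>phase z (eig h (real n - b)) - phase z (eig h (real n))\<bar> \<le> M n"
    using phase_diff_majorant[where X = "\<bar>p\<bar> + \<bar>s\<bar>" and Y = 1 and h = h and b = b] by blast
  have "norm (phase (Complex (p + t * s) t) (eig h (real n - b)) - phase (Complex (p + t * s) t) (eig h (real n)))
      \<le> M n" if "t \<in> {0<..1}" for n t
  proof -
    have "\<bar>p + t * s\<bar> \<le> \<bar>p\<bar> + \<bar>s\<bar>"
      using that abs_triangle_ineq[of p "t * s"] mult_left_le_one_le[of "\<bar>s\<bar>" t] by (simp add: abs_mult)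
    then show ?thesis
      using that M[of "Complex (p + t * s) t" n] by simp
  qed
  then show ?thesis
    unfolding phase_sum_def by (rule Weierstrass_m_test[OF _ \<open>summable M\<close>])
qed

lemma tendsto_phase_sum_along_ray:
  "((\<lambda>t. phase_sum h b (Complex (p + t * s) t)) \<longlongrightarrow>
     - pi * count_below h b p + count_at h b p * (arctan (- s) - pi / 2)) (at 0 within {0<..1})"
proof -
  define l where "l n = phase_limit p s (eig h (real n - b)) - phase_limit p s (eig h (real n))" for n
  obtain N where N: "\<And>n. n \<ge> N \<Longrightarrow> p < eig h (real n) \<and> p < eig h (real n - b)"
    using eventually_conj[OF eventually_eig_gt[of p h 0] eventually_eig_gt[of p h "- b"]]
    by (auto simp: eventually_sequentially)
  have "l n = 0" if "n \<ge> N" for n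
    using N[OF that] by (simp add: l_def phase_limit_def)
  then have "l sums (\<Sum>n<N. l n)"
    by (intro sums_finite) auto
  moreover have "\<forall>\<^sub>F n in sequentially. ((\<lambda>t. \<Sum>i<n. phase (Complex (p + t * s) t) (eig h (real i - b)) -
      phase (Complex (p + t * s) t) (eig h (real i))) \<longlongrightarrow> (\<Sum>i<n. l i)) (at 0 within {0<..1})"
    unfolding l_def
    by (intro always_eventually allI tendsto_sum tendsto_diff tendsto_within_subset[OF tendsto_phase_along_ray]) auto
  ultimately have "((\<lambda>t. phase_sum h b (Complex (p + t * s) t)) \<longlongrightarrow> (\<Sum>n<N. l n)) (at 0 within {0<..1})"
    using uniform_limit_phase_sum_along_ray by (intro swap_uniform_limit) (auto simp: sums_def)
  moreover have "(\<Sum>n<N. l n) = - pi * count_below h b p + count_at h b p * (arctan (- s) - pi / 2)"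
    unfolding l_def sum_subtractf count_below_def count_at_def
    using sum_phase_limit[of N p "\<lambda>n. eig h (real n - b)" s] sum_phase_limit[of N p "\<lambda>n. eig h (real n)" s] N
    by (simp add: algebra_simps)
  ultimately show ?thesis
    by simp
qed

lemma boundary_sign:
  assumes "\<And>z. Im z > 0 \<Longrightarrow> K * sin (phase_sum h b z) > 0" "- (pi / 2) < \<psi>" "\<psi> < pi / 2"
  shows "0 \<le> K * sin (- pi * count_below h b p + count_at h b p * (\<psi> - pi / 2))"
proof -
  have "arctan (- (- tan \<psi>)) = \<psi>"
    using assms(2,3) by (simp add: arctan_tan)
  moreover have "((\<lambda>t. K * sin (phase_sum h b (Complex (p + t * - tan \<psi>) t))) \<longlongrightarrow>
      K * sin (- pi * count_below h b p + count_at h b p * (arctan (- (- tan \<psi>)) - pi / 2)))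
      (at 0 within {0<..1})"
    by (intro tendsto_mult_left tendsto_sin tendsto_phase_sum_along_ray)
  ultimately have "((\<lambda>t. K * sin (phase_sum h b (Complex (p + t * - tan \<psi>) t))) \<longlongrightarrow>
      K * sin (- pi * count_below h b p + count_at h b p * (\<psi> - pi / 2))) (at 0 within {0<..1})"
    by simp
  moreover have "\<forall>\<^sub>F t in at 0 within {0<..1}. 0 \<le> K * sin (phase_sum h b (Complex (p + t * - tan \<psi>) t))"
    using assms(1) by (auto simp: eventually_at_filter intro!: always_eventually less_imp_le)
  ultimately show ?thesis
    by (rule tendsto_lowerbound) (simp add: trivial_limit_within)
qed

definition admissible_counts :: "real \<Rightarrow> int set" where
  "admissible_counts K = (if K < 0 then {0, 1} else {-1, 0})"

lemma sin_int_pi_shift: "sin (- pi * of_int c + x) = (if even c then 1 else -1) * sin x"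
  unfolding mult_minus_left sin_add sin_minus cos_minus sin_npi_int cos_npi_int by simp

lemma sin_int_mult_takes_sign:
  fixes k :: int
  assumes "\<bar>k\<bar> \<ge> 2" "e \<in> {-1, 1}"
  shows "\<exists>\<theta>. - pi < \<theta> \<and> \<theta> < 0 \<and> sin (of_int k * \<theta>) = e"
proof -
  define m where "m = real_of_int \<bar>k\<bar>"
  have "m \<ge> 2"
    using assms(1) by (simp add: m_def)
  then have "- pi < - (pi / 2) / m" "- (pi / 2) / m < 0" "- pi < - (pi / 2 + pi) / m" "- (pi / 2 + pi) / m < 0"
    by (simp_all add: field_simps)
  moreover have "sin (m * (- (pi / 2) / m)) = -1" "sin (m * (- (pi / 2 + pi) / m)) = 1"
    using \<open>m \<ge> 2\<close> sin_periodic_pi[of "pi / 2"] by simp_all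
  ultimately have "\<exists>\<theta>. - pi < \<theta> \<and> \<theta> < 0 \<and> sin (m * \<theta>) = e'" if "e' \<in> {-1, 1}" for e'
    using that by blast
  moreover have "(if k > 0 then e else - e) \<in> {-1, 1}"
    using assms(2) by auto
  ultimately have "\<exists>\<theta>. - pi < \<theta> \<and> \<theta> < 0 \<and> sin (m * \<theta>) = (if k > 0 then e else - e)"
    by blast
  then show ?thesis
    by (auto simp: m_def split: if_splits)
qed

lemma sin_int_mult_nonneg_cases:
  fixes k :: int
  assumes "\<kappa> \<noteq> 0" "\<And>\<theta>. - pi < \<theta> \<Longrightarrow> \<theta> < 0 \<Longrightarrow> 0 \<le> \<kappa> * sin (of_int k * \<theta>)"
  shows "k = 0 \<or> (k = 1 \<and> \<kappa> < 0) \<or> (k = -1 \<and> \<kappa> > 0)"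
proof -
  have "\<bar>k\<bar> \<le> 1"
  proof (rule ccontr)
    assume "\<not> \<bar>k\<bar> \<le> 1"
    then have "\<bar>k\<bar> \<ge> 2"
      by linarith
    moreover have "(if \<kappa> > 0 then -1 else 1) \<in> {-1, 1 :: real}"
      by simp
    ultimately obtain \<theta> where "- pi < \<theta>" "\<theta> < 0" "sin (of_int k * \<theta>) = (if \<kappa> > 0 then -1 else 1)"
      using sin_int_mult_takes_sign by blast
    then show False
      using assms(2)[of \<theta>] assms(1) by (simp split: if_splits)
  qed
  then consider "k = 0" | "k = 1" | "k = -1"
    by linarith
  then show ?thesis
    using assms(2)[of "- (pi / 2)"] assms(1) by cases (auto simp: less_le)
qed

lemma admissible_step:
  fixes c k :: int
  assumes "K \<noteq> 0" "c \<in> admissible_counts K"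
    and sign: "\<And>\<psi>. - (pi / 2) < \<psi> \<Longrightarrow> \<psi> < pi / 2 \<Longrightarrow> 0 \<le> K * sin (- pi * c + k * (\<psi> - pi / 2))"
  shows "c + k \<in> admissible_counts K"
proof -
  define \<kappa> where "\<kappa> = (if even c then K else - K)"
  have "0 \<le> \<kappa> * sin (of_int k * \<theta>)" if "- pi < \<theta>" "\<theta> < 0" for \<theta> :: real
  proof -
    have "0 \<le> K * sin (- pi * of_int c + of_int k * ((\<theta> + pi / 2) - pi / 2))"
      by (rule sign) (use that in linarith)+
    then show ?thesis
      unfolding add_diff_cancel_right sin_int_pi_shift by (cases "even c") (simp_all add: \<kappa>_def)
  qed
  moreover have "\<kappa> \<noteq> 0"
    using assms(1) by (simp add: \<kappa>_def)
  ultimately have "k = 0 \<or> (k = 1 \<and> \<kappa> < 0) \<or> (k = -1 \<and> \<kappa> > 0)"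
    by (intro sin_int_mult_nonneg_cases)
  then show ?thesis
    using assms(2) by (auto simp: admissible_counts_def \<kappa>_def split: if_splits)
qed

lemma card_less_split:
  fixes f :: "nat \<Rightarrow> real"
  assumes "finite {n. f n \<le> q}" "q < p" "\<And>n. f n \<notin> {q<..<p}"
  shows "card {n. f n < p} = card {n. f n < q} + card {n. f n = q}"
proof -
  have "f n < p \<longleftrightarrow> f n < q \<or> f n = q" for n
    using assms(2) assms(3)[of n] by auto
  then have "{n. f n < p} = {n. f n < q} \<union> {n. f n = q}"
    by auto
  moreover have "finite {n. f n < q}" "finite {n. f n = q}"
    by (rule finite_subset[OF _ assms(1)]; force)+
  ultimately show ?thesis
    by (simp add: card_Un_disjoint disjoint_iff)
qed

lemma count_below_split:
  assumes "q < p" "\<And>n. eig h (real n) \<notin> {q<..<p}" "\<And>n. eig h (real n - b) \<notin> {q<..<p}"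
  shows "count_below h b p = count_below h b q + count_at h b q"
  using card_less_split[OF finite_eig_le[of h 0 q, simplified] assms(1,2)]
    card_less_split[OF finite_eig_le[of h "- b" q, simplified] assms(1,3)]
  unfolding count_below_def count_at_def by simp

definition eig_levels_below :: "real \<Rightarrow> real \<Rightarrow> real \<Rightarrow> real set" where
  "eig_levels_below h b p = {x. x < p \<and> (\<exists>n. x = eig h (real n) \<or> x = eig h (real n - b))}"

lemma finite_eig_levels_below: "finite (eig_levels_below h b p)"
proof -
  have "eig_levels_below h b p \<subseteq> (\<lambda>n. eig h (real n + 0)) ` {n. eig h (real n + 0) \<le> p} \<union>
      (\<lambda>n. eig h (real n + - b)) ` {n. eig h (real n + - b) \<le> p}"
    unfolding eig_levels_below_def by force
  then show ?thesis
    using finite_eig_le by (meson finite_Un finite_imageI finite_subset)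
qed

lemma count_below_admissible:
  assumes "K \<noteq> 0"
    and sign: "\<And>p \<psi>. - (pi / 2) < \<psi> \<Longrightarrow> \<psi> < pi / 2 \<Longrightarrow>
      0 \<le> K * sin (- pi * count_below h b p + count_at h b p * (\<psi> - pi / 2))"
  shows "count_below h b p \<in> admissible_counts K"
proof (induction "card (eig_levels_below h b p)" arbitrary: p rule: less_induct)
  case less
  show ?case
  proof (cases "eig_levels_below h b p = {}")
    case True
    then have "{n. eig h (real n - b) < p} = {}" "{n. eig h (real n) < p} = {}"
      unfolding eig_levels_below_def by auto
    then show ?thesis
      by (simp add: count_below_def admissible_counts_def)
  next
    case False
    define q where "q = Max (eig_levels_below h b p)"
    have "q \<in> eig_levels_below h b p" and le: "\<And>x. x \<in> eig_levels_below h b p \<Longrightarrow> x \<le> q"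
      using False finite_eig_levels_below by (simp_all add: q_def)
    then have "q < p" "eig_levels_below h b q \<subset> eig_levels_below h b p"
      by (auto simp: eig_levels_below_def)
    moreover have "eig h (real n) \<notin> {q<..<p}" "eig h (real n - b) \<notin> {q<..<p}" for n
      using le[of "eig h (real n)"] le[of "eig h (real n - b)"] by (fastforce simp: eig_levels_below_def)+
    ultimately have "count_below h b p = count_below h b q + count_at h b q"
      by (intro count_below_split)
    moreover have "count_below h b q \<in> admissible_counts K"
      using \<open>eig_levels_below h b q \<subset> eig_levels_below h b p\<close>
      by (intro less.hyps psubset_card_mono finite_eig_levels_below)
    then have "count_below h b q + count_at h b q \<in> admissible_counts K"
      by (intro admissible_step assms(1) sign)
    ultimately show ?thesis
      by simp
  qed
qed

section \<open>Counting points of shifted lattices\<close>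

definition lattice_count :: "real \<Rightarrow> real \<Rightarrow> int" where
  "lattice_count x r = int (card {n::nat. \<bar>real n + x\<bar> < r})"

lemma count_below_eq_lattice_count:
  assumes "r > 0"
  shows "count_below h b (r\<^sup>2 - h\<^sup>2) = lattice_count (h - b) r - lattice_count h r"
proof -
  have "eig h (real n - b) < r\<^sup>2 - h\<^sup>2 \<longleftrightarrow> \<bar>real n + (h - b)\<bar> < r" for n
    using eig_less_iff[OF assms, of h "real n - b"] by (simp add: diff_add_eq add_diff_eq)
  then show ?thesis
    unfolding count_below_def lattice_count_def eig_less_iff[OF assms] by simp
qed

lemma lattice_count_large:
  assumes "\<bar>x\<bar> < r"
  shows "lattice_count x r = \<lceil>r - x\<rceil>"
proof -
  have "{n::nat. \<bar>real n + x\<bar> < r} = {..< nat \<lceil>r - x\<rceil>}"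
    using assms by (auto simp: zless_nat_eq_int_zless less_ceiling_iff abs_less_iff)
  then show ?thesis
    using assms by (simp add: lattice_count_def)
qed

lemma abs_int_add_frac_less_iff:
  fixes f r :: real and k :: int
  assumes "0 \<le> f" "f < 1" "r \<le> 1"
  shows "\<bar>of_int k + f\<bar> < r \<longleftrightarrow> (k = 0 \<and> f < r) \<or> (k = -1 \<and> 1 - f < r)"
proof -
  consider "k \<ge> 1" | "k = 0" | "k = -1" | "k \<le> -2"
    by linarith
  then show ?thesis
  proof cases
    case 1
    then have "of_int k \<ge> (1::real)"
      by simp
    then show ?thesis
      using 1 assms by auto
  next
    case 4
    then have "of_int k \<le> (-2::real)"
      by simp
    then show ?thesis
      using 4 assms by auto
  qed (use assms in auto)
qed

lemma lattice_count_small: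
  assumes "x < 1" "r \<le> 1"
  shows "lattice_count x r = of_bool (frac x < r) + of_bool (x < 0 \<and> 1 - frac x < r)"
proof -
  define k where "k = - \<lfloor>x\<rfloor>"
  have "k \<ge> 0" "k \<ge> 1 \<longleftrightarrow> x < 0"
    using assms(1) floor_less_zero[of x] unfolding k_def by linarith+
  have "\<bar>real n + x\<bar> < r \<longleftrightarrow> (int n = k \<and> frac x < r) \<or> (int n = k - 1 \<and> 1 - frac x < r)" for n
  proof -
    have "real n + x = of_int (int n - k) + frac x"
      by (simp add: k_def frac_def)
    then show ?thesis
      unfolding \<open>real n + x = of_int (int n - k) + frac x\<close>
      using abs_int_add_frac_less_iff[OF frac_ge_0 frac_lt_1 assms(2), of "int n - k" x] by auto
  qed
  then have "{n. \<bar>real n + x\<bar> < r} = {n. int n = k \<and> frac x < r} \<union> {n. int n = k - 1 \<and> 1 - frac x < r}"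
    by auto
  also have "\<dots> = (if frac x < r then {nat k} else {}) \<union> (if x < 0 \<and> 1 - frac x < r then {nat (k - 1)} else {})"
    using \<open>k \<ge> 0\<close> \<open>k \<ge> 1 \<longleftrightarrow> x < 0\<close> by auto
  finally show ?thesis
    using \<open>k \<ge> 0\<close> \<open>k \<ge> 1 \<longleftrightarrow> x < 0\<close> unfolding lattice_count_def by auto
qed

lemma min_frac_neq:
  assumes "x - y \<notin> \<int>" "x + y \<notin> \<int>"
  shows "min (frac x) (1 - frac x) \<noteq> min (frac y) (1 - frac y)"
proof
  assume "min (frac x) (1 - frac x) = min (frac y) (1 - frac y)"
  then have "frac x = frac y \<or> frac x + frac y = 1"
    by (auto simp: min_def split: if_splits)
  then have "x - y = of_int (\<lfloor>x\<rfloor> - \<lfloor>y\<rfloor>) \<or> x + y = of_int (\<lfloor>x\<rfloor> + \<lfloor>y\<rfloor> + 1)"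
    by (auto simp: frac_def)
  then show False
    using assms by (metis Ints_of_int)
qed

lemma lattice_count_separates_nonneg:
  assumes "0 \<le> x" "x' < x" "x - x' < 1" "x + x' < 0"
  shows "\<exists>r>0. lattice_count x' r < lattice_count x r"
proof -
  have "- 1 < x'" "x' < 0" "x < 1"
    using assms by linarith+
  then have "frac x' = x' + 1"
    by (simp add: frac_unique_iff)
  define r where "r = (x + min (- x') (1 + x')) / 2"
  have "x < r" "r < - x'" "r < 1 + x'" "r \<le> 1"
    using assms(2-4) \<open>x' < 0\<close> by (auto simp: r_def min_def)
  then show ?thesis
    using assms(1) \<open>x < 1\<close> \<open>x' < 0\<close> \<open>frac x' = x' + 1\<close> lattice_count_small[of x r] lattice_count_small[of x' r]
    by (intro exI[of _ r]) (simp add: frac_eq)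
qed

lemma lattice_count_separates:
  assumes "x' < x" "x - x' < 1" "x + x' < 0" "x + x' \<notin> \<int>"
  shows "\<exists>r>0. lattice_count x' r < lattice_count x r"
proof (cases "x \<ge> 0")
  case True
  then show ?thesis
    using assms(1-3) by (rule lattice_count_separates_nonneg)
next
  case False
  define d where "d y = min (frac y) (1 - frac y)" for y :: real
  have count: "lattice_count y r = of_bool (d y < r) + of_bool (1 - d y < r)" if "y < 0" "r \<le> 1" for y r
    using lattice_count_small[OF _ that(2), of y] that(1) by (auto simp: d_def min_def)
  have d: "0 \<le> d y" "d y \<le> 1 / 2" for y
    using frac_lt_1[of y] by (auto simp: d_def min_def)
  have "x - x' \<notin> \<int>"
    using assms(1,2) frac_eq_0_iff[of "x - x'"] frac_eq[of "x - x'"] by auto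
  then have "d x \<noteq> d x'"
    using min_frac_neq[OF _ assms(4)] unfolding d_def by blast
  then consider "d x < d x'" | "d x' < d x"
    by linarith
  then show ?thesis
  proof cases
    case 1
    define r where "r = (d x + d x') / 2"
    have "0 < r" "r \<le> 1" "d x < r" "\<not> d x' < r" "\<not> 1 - d x' < r"
      using 1 d[of x] d[of x'] by (simp_all add: r_def field_simps)
    then show ?thesis
      using False assms(1) count[of x r] count[of x' r] by (intro exI[of _ r]) auto
  next
    case 2
    define r where "r = 1 - (d x + d x') / 2"
    have "0 < r" "r \<le> 1" "d x < r" "1 - d x < r" "d x' < r" "\<not> 1 - d x' < r"
      using 2 d[of x] d[of x'] by (simp_all add: r_def field_simps)
    then show ?thesis
      using False assms(1) count[of x r] count[of x' r] by (intro exI[of _ r]) auto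
  qed
qed

lemma count_below_far:
  assumes "real N > 2 * \<bar>h\<bar> + \<bar>h - b\<bar>" "0 < d" "d < 1"
  shows "count_below h b ((h + real N + d)\<^sup>2 - h\<^sup>2) = \<lceil>d + b\<rceil> - 1"
proof -
  define r where "r = h + real N + d"
  have "\<bar>h\<bar> < r" "\<bar>h - b\<bar> < r"
    using assms(1,2) abs_ge_self[of h] abs_ge_minus_self[of h] abs_ge_zero[of "h - b"] unfolding r_def
    by linarith+
  then have "count_below h b (r\<^sup>2 - h\<^sup>2) = \<lceil>r - (h - b)\<rceil> - \<lceil>r - h\<rceil>"
    by (simp add: count_below_eq_lattice_count lattice_count_large)
  moreover have "r - (h - b) = (d + b) + of_int (int N)" "r - h = d + of_int (int N)"
    by (simp_all add: r_def)
  moreover have "\<lceil>d\<rceil> = 1"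
    using assms(2,3) by (simp add: ceiling_eq_iff)
  ultimately show ?thesis
    unfolding r_def[symmetric] by (simp only: ceiling_add_of_int)
qed

lemma beta_range:
  assumes "K \<noteq> 0" "b \<notin> \<int>" "\<And>p. count_below h b p \<in> admissible_counts K"
  shows "(K < 0 \<and> 0 < b \<and> b < 1) \<or> (0 < K \<and> -1 < b \<and> b < 0)"
proof -
  obtain N :: nat where N: "real N > 2 * \<bar>h\<bar> + \<bar>h - b\<bar>"
    using reals_Archimedean2 by blast
  have f: "0 < frac b" "frac b < 1"
    using assms(2) frac_ge_0[of b] frac_lt_1[of b] by (auto simp: order.order_iff_strict)
  then have "\<lceil>(1 - frac b) / 2 + b\<rceil> = \<lfloor>b\<rfloor> + 1" "\<lceil>(1 - frac b / 2) + b\<rceil> = \<lfloor>b\<rfloor> + 2"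
    by (simp_all add: ceiling_eq_iff frac_def field_simps)
  then have "count_below h b ((h + real N + (1 - frac b) / 2)\<^sup>2 - h\<^sup>2) = \<lfloor>b\<rfloor>"
    "count_below h b ((h + real N + (1 - frac b / 2))\<^sup>2 - h\<^sup>2) = \<lfloor>b\<rfloor> + 1"
    using count_below_far[OF N, of "(1 - frac b) / 2"] count_below_far[OF N, of "1 - frac b / 2"] f by simp_all
  then have "\<lfloor>b\<rfloor> \<in> admissible_counts K" "\<lfloor>b\<rfloor> + 1 \<in> admissible_counts K"
    by (metis assms(3))+
  then have "(K < 0 \<and> \<lfloor>b\<rfloor> = 0) \<or> (0 < K \<and> \<lfloor>b\<rfloor> = -1)"
    using assms(1) by (auto simp: admissible_counts_def split: if_splits)
  then show ?thesis
    using f by (auto simp: frac_def)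
qed

lemma alpha_range:
  assumes "b \<notin> \<int>" "\<And>p. count_below h b p \<in> admissible_counts K"
    and "(K < 0 \<and> 0 < b \<and> b < 1) \<or> (0 < K \<and> -1 < b \<and> b < 0)"
  shows "neg_nat_or_gt_minus_one (2 * h - b - 1)"
proof (rule ccontr)
  assume contra: "\<not> ?thesis"
  have "2 * h - b \<notin> \<int>"
  proof
    assume "2 * h - b \<in> \<int>"
    then obtain k where k: "2 * h - b = of_int k"
      by (auto elim: Ints_cases)
    then have "nat (1 - k) \<ge> 1" "2 * h - b - 1 = - real (nat (1 - k))"
      using contra by (auto simp: neg_nat_or_gt_minus_one_def)
    then show False
      using contra unfolding neg_nat_or_gt_minus_one_def by blast
  qed
  moreover have "2 * h - b < 0"
    using contra calculation by (cases "2 * h - b = 0") (auto simp: neg_nat_or_gt_minus_one_def)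
  ultimately have "h + (h - b) < 0" "h + (h - b) \<notin> \<int>" "(h - b) + h < 0" "(h - b) + h \<notin> \<int>"
    by (simp_all add: algebra_simps)
  from assms(3) show False
  proof
    assume K: "K < 0 \<and> 0 < b \<and> b < 1"
    then obtain r where "r > 0" "lattice_count (h - b) r < lattice_count h r"
      using lattice_count_separates[of "h - b" h] \<open>h + (h - b) < 0\<close> \<open>h + (h - b) \<notin> \<int>\<close> by auto
    then show False
      using assms(2)[of "r\<^sup>2 - h\<^sup>2"] K by (auto simp: count_below_eq_lattice_count admissible_counts_def)
  next
    assume K: "0 < K \<and> -1 < b \<and> b < 0"
    then obtain r where "r > 0" "lattice_count h r < lattice_count (h - b) r"
      using lattice_count_separates[of h "h - b"] \<open>(h - b) + h < 0\<close> \<open>(h - b) + h \<notin> \<int>\<close> by auto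
    then show False
      using assms(2)[of "r\<^sup>2 - h\<^sup>2"] K by (auto simp: count_below_eq_lattice_count admissible_counts_def)
  qed
qed

lemma herglotz_phase_only_if:
  assumes "K \<noteq> 0" "b \<notin> \<int>" "\<And>z. Im z > 0 \<Longrightarrow> K * sin (phase_sum h b z) > 0"
  shows "neg_nat_or_gt_minus_one (2 * h - b - 1) \<and> b \<in> {-1<..<0} \<union> {0<..<1}"
proof -
  have admissible: "\<And>p. count_below h b p \<in> admissible_counts K"
    using assms(1,3) by (intro count_below_admissible boundary_sign)
  then have "(K < 0 \<and> 0 < b \<and> b < 1) \<or> (0 < K \<and> -1 < b \<and> b < 0)"
    by (rule beta_range[OF assms(1,2)])
  with alpha_range[OF assms(2) admissible this] show ?thesis
    by auto
qed

lemma herglotz_phase_if: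
  assumes "neg_nat_or_gt_minus_one (2 * h - b - 1)" "b \<in> {-1<..<0} \<union> {0<..<1}" "K * b < 0" "Im z > 0"
  shows "K * sin (phase_sum h b z) > 0"
proof -
  have "b * sin (phase_sum h b z) < 0"
    using assms by (intro beta_sin_phase_sum_neg) auto
  then have "0 < (K * b) * (b * sin (phase_sum h b z))"
    using assms(3) by (rule mult_neg_neg[rotated])
  also have "\<dots> = (K * sin (phase_sum h b z)) * b\<^sup>2"
    by (simp add: power2_eq_square)
  finally show ?thesis
    by (simp add: zero_less_mult_iff)
qed

theorem theorem8p1:
  fixes \<alpha> \<beta> :: real
  assumes "\<beta> \<notin> \<int>"
  shows "nevanlinna_herglotz (m_hat \<alpha> \<beta>) \<longleftrightarrow>
           ((\<exists>n::nat. n \<ge> 1 \<and> \<alpha> = - real n) \<or> \<alpha> > -1) \<and>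
           (\<beta> \<in> {-1<..<0} \<union> {0<..<1})"
proof -
  define h where "h = (1 + \<alpha> + \<beta>) / 2"
  have "2 * h - \<beta> - 1 = \<alpha>"
    by (simp add: h_def field_simps)
  then have alpha: "neg_nat_or_gt_minus_one (2 * h - \<beta> - 1) \<longleftrightarrow>
      (\<exists>n::nat. n \<ge> 1 \<and> \<alpha> = - real n) \<or> \<alpha> > -1"
    by (simp add: neg_nat_or_gt_minus_one_def)
  have herglotz: "nevanlinna_herglotz (m_hat \<alpha> \<beta>) \<longleftrightarrow>
      (\<forall>z. Im z > 0 \<longrightarrow> m_hat_const \<alpha> \<beta> * sin (phase_sum h \<beta> z) > 0)"
    unfolding h_def by (rule nevanlinna_herglotz_m_hat_iff)
  show ?thesis
  proof
    assume "nevanlinna_herglotz (m_hat \<alpha> \<beta>)"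
    then show "((\<exists>n::nat. n \<ge> 1 \<and> \<alpha> = - real n) \<or> \<alpha> > -1) \<and> \<beta> \<in> {-1<..<0} \<union> {0<..<1}"
      using herglotz_phase_only_if[OF m_hat_const_nonzero[OF assms] assms] herglotz alpha by blast
  next
    assume "((\<exists>n::nat. n \<ge> 1 \<and> \<alpha> = - real n) \<or> \<alpha> > -1) \<and> \<beta> \<in> {-1<..<0} \<union> {0<..<1}"
    then show "nevanlinna_herglotz (m_hat \<alpha> \<beta>)"
      using herglotz_phase_if m_hat_const_mult_neg[of \<beta> \<alpha>] herglotz alpha by fastforce
  qed
qed

end
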